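(* Let $G=(g_1,\dots,g_k)\in\mathbb{N}_0^k$ be telescopic with $g_1>0$ and $c(G)=(c_2,\dots,c_k)$, and let $1\le n\le m\le k$. Suppose $g_n$ is an $\mathbb{N}_0$-linear combination of the entries $g_i$ with $1\le i\le m$, $i\ne n$. Then either $g_n$ is an $\mathbb{N}_0$-linear combination of the entries $g_i$ with $1\le i\le m-1$, $i\ne n$, or $g_n=c_mg_m$.
   Context: $G_i=(g_1,\dots,g_i)$, $d_i=\gcd(G_i)$, $c_j=d_{j-1}/d_j$; $G$ is telescopic if $c_jg_j$ is an $\mathbb{N}_0$-linear combination of $g_1,\dots,g_{j-1}$ for all $2\le j\le k$. An empty $\mathbb{N}_0$-linear combination equals $0$. *)

theory Defs
  imports Main
begin

text \<open>A sequence G = (g_1,...,g_k) of nonnegative integers is modelled as a function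
  g :: nat => nat together with its length k; only the values g 1, ..., g k matter.\<close>

definition dG :: "(nat \<Rightarrow> nat) \<Rightarrow> nat \<Rightarrow> nat" where
  "dG g i = Gcd (g ` {1..i})"

definition cG :: "(nat \<Rightarrow> nat) \<Rightarrow> nat \<Rightarrow> nat" where
  "cG g j = dG g (j - 1) div dG g j"

definition lincomb :: "(nat \<Rightarrow> nat) \<Rightarrow> nat set \<Rightarrow> nat \<Rightarrow> bool" where
  "lincomb g S x \<longleftrightarrow> (\<exists>a :: nat \<Rightarrow> nat. x = (\<Sum>i\<in>S. a i * g i))"

definition telescopic :: "(nat \<Rightarrow> nat) \<Rightarrow> nat \<Rightarrow> bool" where
  "telescopic g k \<longleftrightarrow> (\<forall>j\<in>{2..k}. lincomb g {1..j-1} (cG g j * g j))"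

end

theory Submission
  imports Defs
begin

text \<open>Write \<open>g\<^sub>n = a g\<^sub>m + y\<close> with \<open>y\<close> a combination of the \<open>g\<^sub>i\<close>, \<open>i < m\<close>, \<open>i \<noteq> n\<close>.
  Since \<open>d\<^sub>m\<^sub>-\<^sub>1\<close> divides \<open>g\<^sub>n\<close> and \<open>y\<close>, it divides \<open>a g\<^sub>m\<close>, which forces \<open>a = q c\<^sub>m\<close>.
  Telescopicity writes \<open>c\<^sub>m g\<^sub>m = b g\<^sub>n + z\<close> with \<open>z\<close> again avoiding \<open>g\<^sub>n\<close> and \<open>g\<^sub>m\<close>, so
  \<open>g\<^sub>n = q b g\<^sub>n + q z + y\<close>. Either \<open>q b = 0\<close>, and \<open>g\<^sub>n = q z + y\<close> avoids \<open>g\<^sub>m\<close>, or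
  \<open>q b \<ge> 1\<close>, which forces \<open>q = 1\<close>, \<open>y = 0\<close> and hence \<open>g\<^sub>n = c\<^sub>m g\<^sub>m\<close>.\<close>

lemma lincomb_zero: "lincomb g S 0"
  unfolding lincomb_def by (rule exI[of _ "\<lambda>_. 0"]) simp

lemma lincomb_add:
  assumes "lincomb g S x" and "lincomb g S y"
  shows "lincomb g S (x + y)"
proof -
  obtain a b where "x = (\<Sum>i\<in>S. a i * g i)" and "y = (\<Sum>i\<in>S. b i * g i)"
    using assms unfolding lincomb_def by blast
  then have "x + y = (\<Sum>i\<in>S. (a i + b i) * g i)"
    by (simp add: distrib_right sum.distrib)
  then show ?thesis unfolding lincomb_def by (rule exI[of _ "\<lambda>i. a i + b i"])
qed

lemma lincomb_mult:
  assumes "lincomb g S x"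
  shows "lincomb g S (q * x)"
proof -
  obtain a where "x = (\<Sum>i\<in>S. a i * g i)" using assms unfolding lincomb_def by blast
  then have "q * x = (\<Sum>i\<in>S. (q * a i) * g i)"
    by (simp add: sum_distrib_left mult.assoc)
  then show ?thesis unfolding lincomb_def by (rule exI[of _ "\<lambda>i. q * a i"])
qed

lemma lincomb_insert_iff:
  assumes "finite S" and "m \<notin> S"
  shows "lincomb g (insert m S) x \<longleftrightarrow> (\<exists>a y. x = a * g m + y \<and> lincomb g S y)"
proof
  assume "lincomb g (insert m S) x"
  then obtain a where "x = (\<Sum>i\<in>insert m S. a i * g i)" unfolding lincomb_def by blast
  then have "x = a m * g m + (\<Sum>i\<in>S. a i * g i)" using assms by simp
  then show "\<exists>a y. x = a * g m + y \<and> lincomb g S y" unfolding lincomb_def by blast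
next
  assume "\<exists>a y. x = a * g m + y \<and> lincomb g S y"
  then obtain a b where x: "x = a * g m + (\<Sum>i\<in>S. b i * g i)"
    unfolding lincomb_def by blast
  have "(\<Sum>i\<in>S. (b(m := a)) i * g i) = (\<Sum>i\<in>S. b i * g i)"
    using assms(2) by (intro sum.cong) auto
  then have "x = (\<Sum>i\<in>insert m S. (b(m := a)) i * g i)" using x assms by simp
  then show "lincomb g (insert m S) x" unfolding lincomb_def by blast
qed

lemma dG_dvd: "i \<in> {1..j} \<Longrightarrow> dG g j dvd g i"
  unfolding dG_def by (simp add: Gcd_dvd)

lemma dG_dvd_lincomb:
  assumes "S \<subseteq> {1..j}" and "lincomb g S x"
  shows "dG g j dvd x"
proof -
  obtain a where "x = (\<Sum>i\<in>S. a i * g i)" using assms(2) unfolding lincomb_def by blast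
  moreover have "dG g j dvd a i * g i" if "i \<in> S" for i
    using that assms(1) dG_dvd by (meson dvd_mult subsetD)
  ultimately show ?thesis by (simp add: dvd_sum)
qed

lemma dG_rec: "1 \<le> m \<Longrightarrow> dG g m = gcd (dG g (m - 1)) (g m)"
proof -
  assume "1 \<le> m"
  then have "{1..m} = insert m {1..m - 1}" by auto
  then show ?thesis unfolding dG_def by (simp add: gcd.commute)
qed

lemma dG_pos: "0 < g 1 \<Longrightarrow> 1 \<le> j \<Longrightarrow> 0 < dG g j"
  using dG_dvd[of 1 j g] by (auto intro: gr0I)

lemma div_gcd_dvd_if_dvd_mult:
  fixes d x a :: nat
  assumes "d dvd a * x" and "d \<noteq> 0"
  shows "d div gcd d x dvd a"
proof -
  define e where "e = gcd d x"
  define c h where "c = d div e" and "h = x div e"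
  have "e \<noteq> 0" unfolding e_def using assms(2) by simp
  have d: "d = c * e" and x: "x = h * e"
    unfolding c_def h_def e_def by simp_all
  have "coprime c h"
    unfolding c_def h_def e_def using assms(2) by (simp add: div_gcd_coprime)
  moreover have "c dvd a * h"
    using assms(1) \<open>e \<noteq> 0\<close> unfolding d x by (simp add: mult.assoc)
  ultimately have "c dvd a" by (simp add: coprime_dvd_mult_left_iff)
  then show ?thesis unfolding c_def h_def e_def .
qed

lemma cG_dvd_coeff:
  assumes "0 < g 1" and "2 \<le> m" and "dG g (m - 1) dvd a * g m"
  shows "cG g m dvd a"
proof -
  have "dG g (m - 1) \<noteq> 0" using dG_pos[of g "m - 1"] assms by simp
  with assms(3) have "dG g (m - 1) div gcd (dG g (m - 1)) (g m) dvd a"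
    by (rule div_gcd_dvd_if_dvd_mult)
  then show ?thesis unfolding cG_def using assms(2) by (simp add: dG_rec)
qed

lemma lincomb_or_eq_of_exchange:
  assumes x: "x = a * u + y" and exchange: "c * u = b * x + z" and "c dvd a"
    and y: "lincomb g S y" and z: "lincomb g S z"
  shows "lincomb g S x \<or> x = c * u"
proof -
  obtain q where a: "a = q * c" using \<open>c dvd a\<close> by (metis dvdE mult.commute)
  have "x = q * (c * u) + y" using x a by (simp add: mult.assoc)
  also have "\<dots> = q * (b * x + z) + y" by (simp only: exchange)
  finally have x': "x = q * b * x + (q * z + y)" by (simp add: algebra_simps)
  show ?thesis
  proof (cases "q * b = 0")
    case True
    then have "q * b * x = 0" by simp
    then have "x = q * z + y" using x' by (simp only: add_0)
    then show ?thesis using lincomb_add[OF lincomb_mult[OF z] y] by simp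
  next
    case False
    then have "x \<le> q * b * x" by simp
    with x' have "q * z + y = 0" by linarith
    with x' have "y = 0" "x = q * b * x" by simp_all
    show ?thesis
    proof (cases "x = 0")
      case True
      then show ?thesis using lincomb_zero by simp
    next
      case False
      then have "q = 1" using \<open>x = q * b * x\<close> by simp
      then show ?thesis using x a \<open>y = 0\<close> by simp
    qed
  qed
qed

theorem mainTheorem19:
  fixes g :: "nat \<Rightarrow> nat" and k n m :: nat
  assumes "telescopic g k" and "g 1 > 0"
    and "1 \<le> n" and "n \<le> m" and "m \<le> k"
    and "lincomb g ({1..m} - {n}) (g n)"
  shows "lincomb g ({1..m-1} - {n}) (g n) \<or> g n = cG g m * g m"
proof (cases "n = m")
  case True
  then have "{1..m} - {n} = {1..m-1} - {n}" by auto
  then show ?thesis using assms(6) by simp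
next
  case False
  define S where "S = {1..m-1} - {n}"
  have S: "finite S" "n \<notin> S" "m \<notin> S" "S \<subseteq> {1..m-1}" and "2 \<le> m" "n \<in> {1..m-1}"
    using False assms(3,4) unfolding S_def by auto
  have "{1..m} - {n} = insert m S" "{1..m-1} = insert n S"
    using False assms(3,4) unfolding S_def by auto
  then obtain a y where gn: "g n = a * g m + y" and y: "lincomb g S y"
    using assms(6) lincomb_insert_iff[OF S(1,3)] by auto
  have "lincomb g {1..m-1} (cG g m * g m)"
    using assms(1,5) \<open>2 \<le> m\<close> unfolding telescopic_def by simp
  then have "lincomb g (insert n S) (cG g m * g m)"
    using \<open>{1..m-1} = insert n S\<close> by simp
  then obtain b z where "cG g m * g m = b * g n + z" and z: "lincomb g S z"
    using lincomb_insert_iff[OF S(1,2)] by auto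
  moreover have "cG g m dvd a"
  proof (rule cG_dvd_coeff[of g m a, OF assms(2) \<open>2 \<le> m\<close>])
    have "dG g (m - 1) dvd g n" "dG g (m - 1) dvd y"
      using dG_dvd[OF \<open>n \<in> {1..m-1}\<close>] dG_dvd_lincomb[OF S(4) y] by simp_all
    then show "dG g (m - 1) dvd a * g m" using gn by (simp add: dvd_add_left_iff)
  qed
  ultimately show ?thesis using lincomb_or_eq_of_exchange[OF gn _ _ y z] unfolding S_def by blast
qed

end
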